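(* Let $S$ be a polynomial ring over a field, $t$ a positive integer, $I\subseteq S$ an ideal and $\sigma$ a term order such that $\operatorname{in}_\sigma(I)$ is a squarefree monomial ideal (so that $I$ is radical and $I=\bigcap_{\mathfrak p\in\operatorname{Min}(I)}\mathfrak p$). Suppose that: (a) $\operatorname{in}_\sigma(\mathfrak p)$ is a squarefree monomial ideal for each $\mathfrak p\in\operatorname{Min}(I)$; (b) $(\operatorname{in}_\sigma(I))^{(t)}=(\operatorname{in}_\sigma(I))^t$; (c) $\operatorname{in}_\sigma(\mathfrak p^{(t)})=(\operatorname{in}_\sigma(\mathfrak p))^{(t)}$ for each $\mathfrak p\in\operatorname{Min}(I)$; (d) $\operatorname{in}_\sigma(I)=\bigcap_{\mathfrak p\in\operatorname{Min}(I)}\operatorname{in}_\sigma(\mathfrak p)$. Then $I^{(t)}=I^t$.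
   Context: $\operatorname{Min}(I)$ is the set of minimal primes of $I$; $I^{(t)}=\bigcap_{\mathfrak p\in\operatorname{Ass}(I)}(I^tS_{\mathfrak p}\cap S)$ is the $t$-th symbolic power; $\operatorname{in}_\sigma$ denotes the initial ideal. *)

theory Defs
  imports "HOL-Library.Poly_Mapping"
begin

text \<open>Multivariate polynomials over 'a in variables of type 'v:
  finitely supported maps from monomials (finitely supported exponent vectors) to coefficients.\<close>
type_synonym ('v, 'a) mpoly = "('v \<Rightarrow>\<^sub>0 nat) \<Rightarrow>\<^sub>0 'a"

definition is_ideal :: "'r::comm_ring_1 set \<Rightarrow> bool" where
  "is_ideal I \<longleftrightarrow> 0 \<in> I \<and> (\<forall>a\<in>I. \<forall>b\<in>I. a + b \<in> I) \<and> (\<forall>r. \<forall>a\<in>I. r * a \<in> I)"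

definition ideal_gen :: "'r::comm_ring_1 set \<Rightarrow> 'r set" where
  "ideal_gen G = \<Inter>{J. is_ideal J \<and> G \<subseteq> J}"

definition ideal_mult :: "'r::comm_ring_1 set \<Rightarrow> 'r set \<Rightarrow> 'r set" where
  "ideal_mult I J = ideal_gen {a * b | a b. a \<in> I \<and> b \<in> J}"

primrec ideal_pow :: "'r::comm_ring_1 set \<Rightarrow> nat \<Rightarrow> 'r set" where
  "ideal_pow I 0 = UNIV"
| "ideal_pow I (Suc n) = ideal_mult I (ideal_pow I n)"

definition prime_ideal :: "'r::comm_ring_1 set \<Rightarrow> bool" where
  "prime_ideal P \<longleftrightarrow> is_ideal P \<and> P \<noteq> UNIV \<and> (\<forall>a b. a * b \<in> P \<longrightarrow> a \<in> P \<or> b \<in> P)"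

definition ideal_colon :: "'r::comm_ring_1 set \<Rightarrow> 'r \<Rightarrow> 'r set" where
  "ideal_colon I f = {g. g * f \<in> I}"

definition Ass :: "'r::comm_ring_1 set \<Rightarrow> 'r set set" where
  "Ass I = {P. prime_ideal P \<and> (\<exists>f. P = ideal_colon I f)}"

definition Min_primes :: "'r::comm_ring_1 set \<Rightarrow> 'r set set" where
  "Min_primes I = {P. prime_ideal P \<and> I \<subseteq> P \<and>
     (\<forall>Q. prime_ideal Q \<and> I \<subseteq> Q \<and> Q \<subseteq> P \<longrightarrow> Q = P)}"

text \<open>I^t S_P \<inter> S = {f. \<exists>s \<notin> P. s f \<in> I^t} (contraction of the localization).\<close>
definition local_contraction :: "'r::comm_ring_1 set \<Rightarrow> 'r set \<Rightarrow> 'r set" where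
  "local_contraction J P = {f. \<exists>s. s \<notin> P \<and> s * f \<in> J}"

definition symb_pow :: "'r::comm_ring_1 set \<Rightarrow> nat \<Rightarrow> 'r set" where
  "symb_pow I t = (\<Inter>P\<in>Ass I. local_contraction (ideal_pow I t) P)"

definition term_order :: "(('v \<Rightarrow>\<^sub>0 nat) \<Rightarrow> ('v \<Rightarrow>\<^sub>0 nat) \<Rightarrow> bool) \<Rightarrow> bool" where
  "term_order le \<longleftrightarrow>
     (\<forall>a. le a a) \<and>
     (\<forall>a b. le a b \<and> le b a \<longrightarrow> a = b) \<and>
     (\<forall>a b c. le a b \<and> le b c \<longrightarrow> le a c) \<and>
     (\<forall>a b. le a b \<or> le b a) \<and>
     (\<forall>a. le 0 a) \<and>
     (\<forall>a b c. le a b \<longrightarrow> le (a + c) (b + c))"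

definition lead_mon :: "(('v \<Rightarrow>\<^sub>0 nat) \<Rightarrow> ('v \<Rightarrow>\<^sub>0 nat) \<Rightarrow> bool) \<Rightarrow> ('v, 'a::zero) mpoly \<Rightarrow> ('v \<Rightarrow>\<^sub>0 nat)" where
  "lead_mon le f = (THE m. m \<in> Poly_Mapping.keys f \<and> (\<forall>m'\<in>Poly_Mapping.keys f. le m' m))"

definition mon :: "('v \<Rightarrow>\<^sub>0 nat) \<Rightarrow> ('v, 'a::{zero,one}) mpoly" where
  "mon m = Poly_Mapping.single m 1"

definition init_ideal :: "(('v \<Rightarrow>\<^sub>0 nat) \<Rightarrow> ('v \<Rightarrow>\<^sub>0 nat) \<Rightarrow> bool) \<Rightarrow> ('v, 'a::field) mpoly set \<Rightarrow> ('v, 'a) mpoly set" where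
  "init_ideal le I = ideal_gen {mon (lead_mon le f) | f. f \<in> I \<and> f \<noteq> 0}"

definition squarefree_monomial_ideal :: "('v, 'a::field) mpoly set \<Rightarrow> bool" where
  "squarefree_monomial_ideal J \<longleftrightarrow>
     (\<exists>G. (\<forall>m\<in>G. \<forall>v. Poly_Mapping.lookup m v \<le> 1) \<and> J = ideal_gen (mon ` G))"

end

(*
  The comparison principle for initial ideals (if J is contained in K and in(K) in in(J),
  then J = K; proved by cancelling leading terms, with Dickson's lemma for termination)
  reduces the claim to in(I^(t)) being contained in in(I^t), which by (b) contains in(I)^(t).
  Hypothesis (d) and the comparison principle make I the intersection of its minimal primes,
  which are finitely many by Noetherianity (Dickson again), hence associated to I; so every
  g in I^(t) lies in each P^(t), and by (c) its leading monomial lies in each in(P)^(t).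
  Finally in(I) = Inter in(P) is radical, being squarefree, so an associated prime
  Q = in(I) : h of in(I) does not contain h and is associated to some in(P); as h^t maps Q^t
  into in(I)^t, the contraction of in(P)^t at Q lies in that of in(I)^t.
*)

theory Submission
  imports Defs "HOL-Library.Infinite_Set"
begin

lemma ideal_zero: "is_ideal I \<Longrightarrow> 0 \<in> I"
  by (simp add: is_ideal_def)

lemma ideal_add: "is_ideal I \<Longrightarrow> a \<in> I \<Longrightarrow> b \<in> I \<Longrightarrow> a + b \<in> I"
  by (simp add: is_ideal_def)

lemma ideal_mult_left: "is_ideal I \<Longrightarrow> a \<in> I \<Longrightarrow> r * a \<in> I"
  by (simp add: is_ideal_def)

lemma ideal_mult_right: "is_ideal I \<Longrightarrow> a \<in> I \<Longrightarrow> a * r \<in> I"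
  by (metis ideal_mult_left mult.commute)

lemma ideal_diff: "is_ideal I \<Longrightarrow> a \<in> I \<Longrightarrow> b \<in> I \<Longrightarrow> a - b \<in> I"
  using ideal_add[of I a "(- 1) * b"] ideal_mult_left[of I b "- 1"] by simp

lemma ideal_prod: "is_ideal I \<Longrightarrow> finite A \<Longrightarrow> a \<in> A \<Longrightarrow> f a \<in> I \<Longrightarrow> prod f A \<in> I"
  by (metis ideal_mult_right prod.remove)

lemma is_ideal_UNIV: "is_ideal UNIV"
  by (simp add: is_ideal_def)

lemma is_ideal_Inter: "(\<And>J. J \<in> S \<Longrightarrow> is_ideal J) \<Longrightarrow> is_ideal (\<Inter>S)"
  unfolding is_ideal_def by auto

lemma is_ideal_ideal_gen: "is_ideal (ideal_gen G)"
  unfolding ideal_gen_def by (rule is_ideal_Inter) auto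

lemma ideal_gen_subset: "G \<subseteq> ideal_gen G"
  unfolding ideal_gen_def by auto

lemma ideal_gen_least: "is_ideal J \<Longrightarrow> G \<subseteq> J \<Longrightarrow> ideal_gen G \<subseteq> J"
  unfolding ideal_gen_def by auto

lemma ideal_gen_mono: "G \<subseteq> H \<Longrightarrow> ideal_gen G \<subseteq> ideal_gen H"
  by (meson ideal_gen_least ideal_gen_subset is_ideal_ideal_gen order_trans)

lemma is_ideal_ideal_mult: "is_ideal (ideal_mult I J)"
  unfolding ideal_mult_def by (rule is_ideal_ideal_gen)

lemma mult_mem_ideal_mult: "a \<in> I \<Longrightarrow> b \<in> J \<Longrightarrow> a * b \<in> ideal_mult I J"
  unfolding ideal_mult_def by (rule ideal_gen_subset[THEN subsetD]) blast

lemma ideal_mult_least: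
  "is_ideal K \<Longrightarrow> (\<And>a b. a \<in> I \<Longrightarrow> b \<in> J \<Longrightarrow> a * b \<in> K) \<Longrightarrow> ideal_mult I J \<subseteq> K"
  unfolding ideal_mult_def by (rule ideal_gen_least) auto

lemma ideal_mult_mono: "I \<subseteq> I' \<Longrightarrow> J \<subseteq> J' \<Longrightarrow> ideal_mult I J \<subseteq> ideal_mult I' J'"
  unfolding ideal_mult_def by (rule ideal_gen_mono) blast

lemma is_ideal_ideal_pow: "is_ideal (ideal_pow I n)"
  by (cases n) (simp_all add: is_ideal_UNIV is_ideal_ideal_mult)

lemma ideal_pow_mono: "I \<subseteq> J \<Longrightarrow> ideal_pow I n \<subseteq> ideal_pow J n"
  by (induction n) (simp_all add: ideal_mult_mono)

lemma is_ideal_ideal_colon: "is_ideal I \<Longrightarrow> is_ideal (ideal_colon I f)"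
  unfolding is_ideal_def ideal_colon_def by (auto simp: distrib_right mult.assoc)

lemma ideal_mult_ideal_gen:
  "ideal_mult (ideal_gen A) (ideal_gen B) \<subseteq> ideal_gen {a * b | a b. a \<in> A \<and> b \<in> B}"
  (is "_ \<subseteq> ?X")
proof (rule ideal_mult_least[OF is_ideal_ideal_gen])
  have "ideal_gen A \<subseteq> ideal_colon ?X b" if "b \<in> B" for b
    using that
    by (intro ideal_gen_least is_ideal_ideal_colon is_ideal_ideal_gen)
      (auto simp: ideal_colon_def intro!: ideal_gen_subset[THEN subsetD])
  then have "ideal_gen B \<subseteq> ideal_colon ?X a" if "a \<in> ideal_gen A" for a
    using that
    by (intro ideal_gen_least is_ideal_ideal_colon is_ideal_ideal_gen)
      (auto simp: ideal_colon_def mult.commute)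
  then show "a * b \<in> ?X" if "a \<in> ideal_gen A" "b \<in> ideal_gen B" for a b
    using that by (auto simp: ideal_colon_def mult.commute)
qed

lemma power_mult_mem_ideal_pow:
  assumes "is_ideal J" and "\<And>q. q \<in> Q \<Longrightarrow> c * q \<in> J" and "x \<in> ideal_pow Q n"
  shows "c ^ n * x \<in> ideal_pow J n"
  using assms(3)
proof (induction n arbitrary: x)
  case (Suc n)
  have "ideal_mult Q (ideal_pow Q n) \<subseteq> ideal_colon (ideal_pow J (Suc n)) (c ^ Suc n)"
  proof (rule ideal_mult_least[OF is_ideal_ideal_colon[OF is_ideal_ideal_pow]])
    fix a b assume "a \<in> Q" "b \<in> ideal_pow Q n"
    then have "(c * a) * (c ^ n * b) \<in> ideal_pow J (Suc n)"
      using Suc.IH assms(2) by (simp add: mult_mem_ideal_mult)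
    then show "a * b \<in> ideal_colon (ideal_pow J (Suc n)) (c ^ Suc n)"
      by (simp add: ideal_colon_def algebra_simps)
  qed
  then show ?case
    using Suc.prems by (auto simp: ideal_colon_def mult.commute)
qed simp

section \<open>Prime ideals, associated primes and symbolic powers\<close>

lemma prime_ideal_is_ideal: "prime_ideal P \<Longrightarrow> is_ideal P"
  by (simp add: prime_ideal_def)

lemma prime_ideal_one: "prime_ideal P \<Longrightarrow> 1 \<notin> P"
  unfolding prime_ideal_def by (metis UNIV_eq_I ideal_mult_left mult.right_neutral)

lemma prime_ideal_mult_iff: "prime_ideal P \<Longrightarrow> a * b \<in> P \<longleftrightarrow> a \<in> P \<or> b \<in> P"
  unfolding prime_ideal_def by (metis ideal_mult_left ideal_mult_right)

lemma prime_ideal_prod: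
  assumes "prime_ideal P" "finite A" "\<And>a. a \<in> A \<Longrightarrow> f a \<notin> P"
  shows "prod f A \<notin> P"
  using assms(2,3)
  by (induction A rule: finite_induct)
    (simp_all add: prime_ideal_one prime_ideal_mult_iff assms(1))

lemma prime_ideal_power: "prime_ideal P \<Longrightarrow> h \<notin> P \<Longrightarrow> h ^ n \<notin> P"
  by (induction n) (simp_all add: prime_ideal_one prime_ideal_mult_iff)

lemma is_ideal_local_contraction:
  assumes J: "is_ideal J" and P: "prime_ideal P"
  shows "is_ideal (local_contraction J P)"
  unfolding is_ideal_def local_contraction_def
proof (intro conjI ballI allI)
  show "0 \<in> {f. \<exists>s. s \<notin> P \<and> s * f \<in> J}"
    using prime_ideal_one[OF P] ideal_zero[OF J] by force
next
  fix a b assume "a \<in> {f. \<exists>s. s \<notin> P \<and> s * f \<in> J}" "b \<in> {f. \<exists>s. s \<notin> P \<and> s * f \<in> J}"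
  then obtain s1 s2 where s: "s1 \<notin> P" "s1 * a \<in> J" "s2 \<notin> P" "s2 * b \<in> J"
    by blast
  have "(s1 * s2) * (a + b) = s2 * (s1 * a) + s1 * (s2 * b)"
    by (simp add: algebra_simps)
  then have "(s1 * s2) * (a + b) \<in> J"
    using s by (simp add: ideal_add ideal_mult_left J)
  moreover have "s1 * s2 \<notin> P"
    using s prime_ideal_mult_iff[OF P] by blast
  ultimately show "a + b \<in> {f. \<exists>s. s \<notin> P \<and> s * f \<in> J}"
    by blast
next
  fix r a assume "a \<in> {f. \<exists>s. s \<notin> P \<and> s * f \<in> J}"
  then obtain s where "s \<notin> P" "s * a \<in> J"
    by blast
  then show "r * a \<in> {f. \<exists>s. s \<notin> P \<and> s * f \<in> J}"
    using ideal_mult_left[OF J, of "s * a" r] by (auto simp: algebra_simps)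
qed

lemma subset_local_contraction: "prime_ideal P \<Longrightarrow> J \<subseteq> local_contraction J P"
  unfolding local_contraction_def using prime_ideal_one by fastforce

lemma is_ideal_symb_pow: "is_ideal (symb_pow I t)"
  unfolding symb_pow_def
  by (rule is_ideal_Inter) (auto simp: Ass_def intro!: is_ideal_local_contraction is_ideal_ideal_pow)

lemma ideal_pow_subset_symb_pow: "ideal_pow I t \<subseteq> symb_pow I t"
  unfolding symb_pow_def Ass_def using subset_local_contraction by blast

lemma ideal_subset_Ass: "is_ideal N \<Longrightarrow> Q \<in> Ass N \<Longrightarrow> N \<subseteq> Q"
  unfolding Ass_def ideal_colon_def by (auto intro: ideal_mult_right)

lemma Ass_prime_ideal:
  assumes "prime_ideal P"
  shows "Ass P = {P}"
proof -
  have "P = ideal_colon P 1"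
    by (simp add: ideal_colon_def)
  then have "P \<in> Ass P"
    using assms by (auto simp: Ass_def)
  moreover have "Q = P" if "Q \<in> Ass P" for Q
  proof -
    obtain f where Q: "prime_ideal Q" "Q = ideal_colon P f"
      using \<open>Q \<in> Ass P\<close> by (auto simp: Ass_def)
    have "f \<notin> P"
      using Q prime_ideal_one[OF Q(1)] assms by (auto simp: ideal_colon_def prime_ideal_def)
    then show ?thesis
      using Q prime_ideal_mult_iff[OF assms] by (auto simp: ideal_colon_def)
  qed
  ultimately show ?thesis
    by blast
qed

lemma symb_pow_prime_ideal: "prime_ideal P \<Longrightarrow> symb_pow P t = local_contraction (ideal_pow P t) P"
  by (simp add: symb_pow_def Ass_prime_ideal)

lemma symb_pow_subset_symb_pow_Ass:
  assumes "is_ideal I" "P \<in> Ass I"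
  shows "symb_pow I t \<subseteq> symb_pow P t"
proof
  fix g assume "g \<in> symb_pow I t"
  then obtain s where "s \<notin> P" "s * g \<in> ideal_pow I t"
    using assms(2) by (auto simp: symb_pow_def local_contraction_def)
  moreover have "prime_ideal P"
    using assms(2) by (simp add: Ass_def)
  ultimately show "g \<in> symb_pow P t"
    using ideal_pow_mono[OF ideal_subset_Ass[OF assms]]
    by (auto simp: symb_pow_prime_ideal local_contraction_def)
qed

lemma Ass_Inter_subset:
  fixes F :: "'r::comm_ring_1 set set"
  assumes "finite F" "\<And>M. M \<in> F \<Longrightarrow> is_ideal M"
  shows "Ass (\<Inter>F) \<subseteq> (\<Union>M\<in>F. Ass M)"
proof
  fix Q assume "Q \<in> Ass (\<Inter>F)"
  then obtain h where Q: "prime_ideal Q" "Q = ideal_colon (\<Inter>F) h"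
    by (auto simp: Ass_def)
  have "\<exists>M\<in>F. ideal_colon M h \<subseteq> Q"
  proof (rule ccontr)
    assume "\<not> ?thesis"
    then have "\<forall>M\<in>F. \<exists>y. y \<in> ideal_colon M h \<and> y \<notin> Q"
      by blast
    then obtain y where y: "\<And>M. M \<in> F \<Longrightarrow> y M \<in> ideal_colon M h \<and> y M \<notin> Q"
      by metis
    have "prod y F \<notin> Q"
      using prime_ideal_prod[OF Q(1) assms(1)] y by blast
    moreover have "prod y F \<in> ideal_colon M h" if "M \<in> F" for M
      using ideal_prod[OF is_ideal_ideal_colon[OF assms(2)[OF that]] assms(1) that] y that by blast
    ultimately show False
      using Q(2) by (auto simp: ideal_colon_def)
  qed
  then obtain M where "M \<in> F" "ideal_colon M h = Q"
    using Q(2) by (auto simp: ideal_colon_def)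
  then show "Q \<in> (\<Union>M\<in>F. Ass M)"
    using Q(1) by (auto simp: Ass_def)
qed

lemma local_contraction_ideal_pow_subset:
  assumes J: "is_ideal J" and Q: "prime_ideal Q" "Q = ideal_colon J h" "h \<notin> Q" and "N \<subseteq> Q"
  shows "local_contraction (ideal_pow N t) Q \<subseteq> local_contraction (ideal_pow J t) Q"
proof
  fix x assume "x \<in> local_contraction (ideal_pow N t) Q"
  then obtain s where s: "s \<notin> Q" "s * x \<in> ideal_pow Q t"
    using ideal_pow_mono[OF \<open>N \<subseteq> Q\<close>] by (auto simp: local_contraction_def)
  have "h ^ t * (s * x) \<in> ideal_pow J t"
    by (rule power_mult_mem_ideal_pow[OF J _ s(2)]) (simp add: Q(2) ideal_colon_def mult.commute)
  moreover have "h ^ t * s \<notin> Q"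
    using prime_ideal_power[OF Q(1,3)] s(1) prime_ideal_mult_iff[OF Q(1)] by blast
  ultimately show "x \<in> local_contraction (ideal_pow J t) Q"
    unfolding local_contraction_def by (auto simp: mult.assoc)
qed

lemma symb_pow_Inter_subset:
  fixes F :: "'r::comm_ring_1 set set"
  assumes F: "finite F" "\<And>N. N \<in> F \<Longrightarrow> is_ideal N"
    and radical: "\<And>h. h * h \<in> \<Inter>F \<Longrightarrow> h \<in> \<Inter>F"
  shows "(\<Inter>N\<in>F. symb_pow N t) \<subseteq> symb_pow (\<Inter>F) t"
proof
  fix x assume x: "x \<in> (\<Inter>N\<in>F. symb_pow N t)"
  show "x \<in> symb_pow (\<Inter>F) t"
    unfolding symb_pow_def
  proof
    fix Q assume "Q \<in> Ass (\<Inter>F)"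
    then obtain h where Q: "prime_ideal Q" "Q = ideal_colon (\<Inter>F) h"
      by (auto simp: Ass_def)
    have "h \<notin> Q"
    proof
      assume "h \<in> Q"
      then have "h \<in> \<Inter>F"
        using Q(2) radical by (simp add: ideal_colon_def)
      then have "1 \<in> Q"
        using Q(2) by (simp add: ideal_colon_def)
      then show False
        using prime_ideal_one[OF Q(1)] by blast
    qed
    obtain N where N: "N \<in> F" "Q \<in> Ass N"
      using Ass_Inter_subset[OF F] \<open>Q \<in> Ass (\<Inter>F)\<close> by blast
    then have "x \<in> local_contraction (ideal_pow N t) Q"
      using x by (auto simp: symb_pow_def)
    moreover have "N \<subseteq> Q"
      using ideal_subset_Ass F(2) N by blast
    ultimately show "x \<in> local_contraction (ideal_pow (\<Inter>F) t) Q"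
      using local_contraction_ideal_pow_subset[OF is_ideal_Inter[OF F(2)] Q \<open>h \<notin> Q\<close>] by blast
  qed
qed

section \<open>Minimal primes\<close>

lemma Min_primesD:
  assumes "P \<in> Min_primes I"
  shows "prime_ideal P" "I \<subseteq> P" "\<And>Q. prime_ideal Q \<Longrightarrow> I \<subseteq> Q \<Longrightarrow> Q \<subseteq> P \<Longrightarrow> Q = P"
  using assms by (auto simp: Min_primes_def)

lemma Min_primes_subset_Ass:
  assumes fin: "finite (Min_primes I)" and I: "I = \<Inter>(Min_primes I)"
  shows "Min_primes I \<subseteq> Ass I"
proof
  fix P assume P: "P \<in> Min_primes I"
  note prime = Min_primesD(1)[OF P]
  define Others where "Others = Min_primes I - {P}"
  have "\<exists>x. x \<in> P' \<and> x \<notin> P" if "P' \<in> Others" for P'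
    using that Min_primesD(3)[OF P, of P'] Min_primesD(1,2)[of P' I] by (auto simp: Others_def)
  then obtain x where x: "\<And>P'. P' \<in> Others \<Longrightarrow> x P' \<in> P' \<and> x P' \<notin> P"
    by metis
  \<comment> \<open>An element of every other minimal prime but not of \<open>P\<close> exhibits \<open>P\<close> as \<open>I : f\<close>.\<close>
  define f where "f = prod x Others"
  have "finite Others"
    using fin by (simp add: Others_def)
  then have "f \<notin> P"
    unfolding f_def using prime_ideal_prod[OF prime] x by blast
  have "y * f \<in> Q" if "y \<in> P" "Q \<in> Min_primes I" for y Q
  proof (cases "Q = P")
    case True
    then show ?thesis
      using that prime ideal_mult_right prime_ideal_is_ideal by blast
  next
    case False
    then have "Q \<in> Others" "is_ideal Q"
      using that Min_primesD(1) prime_ideal_is_ideal by (auto simp: Others_def)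
    then have "f \<in> Q"
      unfolding f_def using ideal_prod[of Q Others Q x] x \<open>finite Others\<close> by blast
    then show ?thesis
      using \<open>is_ideal Q\<close> ideal_mult_left by blast
  qed
  then have "P \<subseteq> ideal_colon I f"
    using I by (auto simp: ideal_colon_def)
  moreover have "ideal_colon I f \<subseteq> P"
    using Min_primesD(2)[OF P] \<open>f \<notin> P\<close> prime_ideal_mult_iff[OF prime]
    by (auto simp: ideal_colon_def)
  ultimately show "P \<in> Ass I"
    using prime by (auto simp: Ass_def)
qed

definition finite_prime_cover :: "'r::comm_ring_1 set set \<Rightarrow> 'r set \<Rightarrow> bool" where
  "finite_prime_cover F J \<longleftrightarrow> finite F \<and> (\<forall>P\<in>F. prime_ideal P \<and> J \<subseteq> P) \<and>
     (\<forall>P. prime_ideal P \<and> J \<subseteq> P \<longrightarrow> (\<exists>P0\<in>F. P0 \<subseteq> P))"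

lemma finite_prime_coverD:
  assumes "finite_prime_cover F J"
  shows "finite F" "P \<in> F \<Longrightarrow> prime_ideal P" "P \<in> F \<Longrightarrow> J \<subseteq> P"
    "prime_ideal P \<Longrightarrow> J \<subseteq> P \<Longrightarrow> \<exists>P0\<in>F. P0 \<subseteq> P"
  using assms unfolding finite_prime_cover_def by simp_all

lemma finite_prime_cover_split:
  assumes "a * b \<in> J" and Fa: "finite_prime_cover Fa (ideal_gen (insert a J))"
    and Fb: "finite_prime_cover Fb (ideal_gen (insert b J))"
  shows "finite_prime_cover (Fa \<union> Fb) J"
proof -
  have "J \<subseteq> ideal_gen (insert c J)" for c
    using ideal_gen_subset by blast
  then have "prime_ideal P \<and> J \<subseteq> P" if "P \<in> Fa \<union> Fb" for P
    using that finite_prime_coverD(2,3)[OF Fa, of P] finite_prime_coverD(2,3)[OF Fb, of P] by blast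
  moreover have "\<exists>P0\<in>Fa \<union> Fb. P0 \<subseteq> P" if P: "prime_ideal P" "J \<subseteq> P" for P
  proof -
    have "a \<in> P \<or> b \<in> P"
      using P \<open>a * b \<in> J\<close> prime_ideal_mult_iff[of P a b] by blast
    then have "ideal_gen (insert a J) \<subseteq> P \<or> ideal_gen (insert b J) \<subseteq> P"
      using P prime_ideal_is_ideal ideal_gen_least[of P "insert a J"] ideal_gen_least[of P "insert b J"]
      by blast
    then show ?thesis
      using P finite_prime_coverD(4)[OF Fa, of P] finite_prime_coverD(4)[OF Fb, of P] by blast
  qed
  moreover have "finite (Fa \<union> Fb)"
    using finite_prime_coverD(1) Fa Fb by blast
  ultimately show ?thesis
    unfolding finite_prime_cover_def by blast
qed

lemma ex_finite_prime_cover: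
  fixes J :: "'r::comm_ring_1 set"
  assumes noetherian: "wf {(K, J :: 'r set). is_ideal J \<and> is_ideal K \<and> J \<subset> K}" and "is_ideal J"
  shows "\<exists>F. finite_prime_cover F J"
  using noetherian assms(2)
proof (induction J rule: wf_induct_rule)
  case (less J)
  consider "J = UNIV" | "prime_ideal J" | a b where "a * b \<in> J" "a \<notin> J" "b \<notin> J"
    using less.prems by (auto simp: prime_ideal_def)
  then show ?case
  proof cases
    case 1
    then have "finite_prime_cover {} J"
      by (auto simp: finite_prime_cover_def prime_ideal_def)
    then show ?thesis ..
  next
    case 2
    then have "finite_prime_cover {J} J"
      by (auto simp: finite_prime_cover_def)
    then show ?thesis ..
  next
    case 3
    have "\<exists>F. finite_prime_cover F (ideal_gen (insert c J))" if "c \<notin> J" for c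
    proof (rule less.IH)
      show "(ideal_gen (insert c J), J) \<in> {(K, J). is_ideal J \<and> is_ideal K \<and> J \<subset> K}"
        using that less.prems ideal_gen_subset[of "insert c J"] is_ideal_ideal_gen by blast
    qed (rule is_ideal_ideal_gen)
    then show ?thesis
      using finite_prime_cover_split[OF 3(1)] 3(2,3) by blast
  qed
qed

lemma finite_Min_primes:
  fixes I :: "'r::comm_ring_1 set"
  assumes "wf {(K, J :: 'r set). is_ideal J \<and> is_ideal K \<and> J \<subset> K}" "is_ideal I"
  shows "finite (Min_primes I)"
proof -
  obtain F where F: "finite_prime_cover F I"
    using ex_finite_prime_cover[OF assms] by blast
  have "Min_primes I \<subseteq> F"
  proof
    fix P assume P: "P \<in> Min_primes I"
    then obtain P0 where "P0 \<in> F" "P0 \<subseteq> P"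
      using finite_prime_coverD(4)[OF F] Min_primesD(1,2) by blast
    moreover have "prime_ideal P0" "I \<subseteq> P0"
      using finite_prime_coverD(2,3)[OF F] calculation by blast+
    ultimately have "P0 = P"
      using Min_primesD(3)[OF P] by blast
    with \<open>P0 \<in> F\<close> show "P \<in> F"
      by simp
  qed
  then show ?thesis
    using finite_prime_coverD(1)[OF F] finite_subset by blast
qed

section \<open>Monomials and Dickson's lemma\<close>

definition mon_dvd :: "('v \<Rightarrow>\<^sub>0 nat) \<Rightarrow> ('v \<Rightarrow>\<^sub>0 nat) \<Rightarrow> bool" where
  "mon_dvd m n \<longleftrightarrow> (\<forall>v. Poly_Mapping.lookup m v \<le> Poly_Mapping.lookup n v)"

lemma mon_dvd_add_diff: "mon_dvd m n \<Longrightarrow> m + (n - m) = n"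
  unfolding mon_dvd_def by (intro poly_mapping_eqI) (simp add: lookup_add lookup_minus)

lemma mon_dvd_add_left: "mon_dvd m n \<Longrightarrow> mon_dvd m (k + n)"
  unfolding mon_dvd_def by (simp add: lookup_add add_increasing)

lemma squarefree_mon_dvd_double:
  assumes "\<forall>v. Poly_Mapping.lookup g v \<le> 1" "mon_dvd g (a + a)"
  shows "mon_dvd g a"
  unfolding mon_dvd_def
proof
  fix v
  have "Poly_Mapping.lookup g v \<le> Poly_Mapping.lookup a v + Poly_Mapping.lookup a v"
    using assms(2) by (simp add: mon_dvd_def lookup_add)
  then show "Poly_Mapping.lookup g v \<le> Poly_Mapping.lookup a v"
    using assms(1)[rule_format, of v] by presburger
qed

lemma mono_nat_subseq:
  fixes s :: "nat \<Rightarrow> nat"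
  shows "\<exists>\<tau> :: nat \<Rightarrow> nat. strict_mono \<tau> \<and> mono (\<lambda>n. s (\<tau> n))"
proof -
  \<comment> \<open>Indices at which \<open>s\<close> attains the minimum of its tail; there are infinitely many.\<close>
  define T where "T = {n. \<forall>m\<ge>n. s n \<le> s m}"
  have "\<exists>n\<in>T. N \<le> n" for N
  proof -
    obtain n where "N \<le> n" "\<forall>m. N \<le> m \<longrightarrow> s n \<le> s m"
      using ex_has_least_nat[of "\<lambda>m. N \<le> m" N s] by blast
    then have "n \<in> T"
      unfolding T_def by auto
    with \<open>N \<le> n\<close> show ?thesis
      by blast
  qed
  then have "infinite T"
    unfolding infinite_nat_iff_unbounded_le by blast
  have "s (enumerate T i) \<le> s (enumerate T j)" if "i \<le> j" for i j
  proof -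
    have "enumerate T i \<in> T"
      by (rule enumerate_in_set[OF \<open>infinite T\<close>])
    moreover have "enumerate T i \<le> enumerate T j"
      using that \<open>infinite T\<close> by simp
    ultimately show ?thesis
      unfolding T_def by blast
  qed
  then have "mono (\<lambda>n. s (enumerate T n))"
    by (rule monoI)
  with strict_mono_enumerate[OF \<open>infinite T\<close>] show ?thesis
    by blast
qed

lemma dickson_subseq:
  fixes m :: "nat \<Rightarrow> ('v \<Rightarrow>\<^sub>0 nat)"
  assumes "finite V"
  shows "\<exists>\<sigma> :: nat \<Rightarrow> nat. strict_mono \<sigma> \<and> (\<forall>v\<in>V. mono (\<lambda>n. Poly_Mapping.lookup (m (\<sigma> n)) v))"
  using assms
proof (induction V rule: finite_induct)
  case empty
  show ?case
    by (rule exI[of _ "\<lambda>n. n"]) (simp add: strict_mono_def)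
next
  case (insert w V)
  then obtain \<sigma> :: "nat \<Rightarrow> nat"
    where \<sigma>: "strict_mono \<sigma>" "\<forall>v\<in>V. mono (\<lambda>n. Poly_Mapping.lookup (m (\<sigma> n)) v)"
    by blast
  obtain \<tau> :: "nat \<Rightarrow> nat"
    where \<tau>: "strict_mono \<tau>" "mono (\<lambda>n. Poly_Mapping.lookup (m (\<sigma> (\<tau> n))) w)"
    using mono_nat_subseq[of "\<lambda>n. Poly_Mapping.lookup (m (\<sigma> n)) w"] by blast
  have "strict_mono (\<lambda>n. \<sigma> (\<tau> n))"
    using \<sigma>(1) \<tau>(1) by (simp add: strict_mono_def)
  moreover have "mono (\<lambda>n. Poly_Mapping.lookup (m (\<sigma> (\<tau> n))) v)" if "v \<in> V" for v
    using \<sigma>(2) that strict_mono_mono[OF \<tau>(1)] by (auto simp: mono_def)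
  ultimately show ?case
    using \<tau>(2) by blast
qed

lemma dickson:
  fixes m :: "nat \<Rightarrow> ('v::finite \<Rightarrow>\<^sub>0 nat)"
  shows "\<exists>i j. i < j \<and> mon_dvd (m i) (m j)"
proof -
  obtain \<sigma> :: "nat \<Rightarrow> nat"
    where "strict_mono \<sigma>" "\<forall>v. mono (\<lambda>n. Poly_Mapping.lookup (m (\<sigma> n)) v)"
    using dickson_subseq[of UNIV m] by auto
  then have "\<sigma> 0 < \<sigma> 1" "mon_dvd (m (\<sigma> 0)) (m (\<sigma> 1))"
    by (auto simp: strict_mono_def mon_dvd_def mono_def)
  then show ?thesis
    by blast
qed

lemma keys_minus_single_lookup:
  fixes f :: "'k \<Rightarrow>\<^sub>0 'a::ab_group_add"
  shows "Poly_Mapping.keys (f - Poly_Mapping.single a (Poly_Mapping.lookup f a)) = Poly_Mapping.keys f - {a}"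
  by (auto simp: in_keys_iff lookup_minus lookup_single when_def split: if_splits)

locale term_ord =
  fixes le :: "('v \<Rightarrow>\<^sub>0 nat) \<Rightarrow> ('v \<Rightarrow>\<^sub>0 nat) \<Rightarrow> bool"
  assumes term_order: "term_order le"
begin

lemma refl: "le a a"
  and antisym: "le a b \<Longrightarrow> le b a \<Longrightarrow> a = b"
  and trans: "le a b \<Longrightarrow> le b c \<Longrightarrow> le a c"
  and total: "le a b \<or> le b a"
  and zero_least: "le 0 a"
  and add_right_mono: "le a b \<Longrightarrow> le (a + c) (b + c)"
  using term_order unfolding term_order_def by blast+

lemma add_mono: "le a b \<Longrightarrow> le c d \<Longrightarrow> le (a + c) (b + d)"
  using add_right_mono[of a b c] add_right_mono[of c d b] trans by (simp add: add.commute)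

lemma mon_dvd_imp_le: "mon_dvd m n \<Longrightarrow> le m n"
  using add_mono[OF refl[of m] zero_least[of "n - m"]] mon_dvd_add_diff by fastforce

definition lt :: "('v \<Rightarrow>\<^sub>0 nat) \<Rightarrow> ('v \<Rightarrow>\<^sub>0 nat) \<Rightarrow> bool" where
  "lt a b \<longleftrightarrow> le a b \<and> a \<noteq> b"

lemma finite_has_greatest: "finite A \<Longrightarrow> A \<noteq> {} \<Longrightarrow> \<exists>m\<in>A. \<forall>m'\<in>A. le m' m"
proof (induction A rule: finite_ne_induct)
  case (singleton x)
  then show ?case
    using refl by simp
next
  case (insert x F)
  then obtain m where "m \<in> F" "\<forall>m'\<in>F. le m' m"
    by blast
  then show ?case
    using total[of x m] trans refl by blast
qed

lemma lead_mon_greatest: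
  assumes "f \<noteq> 0"
  shows "lead_mon le f \<in> Poly_Mapping.keys f \<and> (\<forall>m\<in>Poly_Mapping.keys f. le m (lead_mon le f))"
  unfolding lead_mon_def
proof (rule theI')
  obtain m where "m \<in> Poly_Mapping.keys f" "\<forall>m'\<in>Poly_Mapping.keys f. le m' m"
    using finite_has_greatest[of "Poly_Mapping.keys f"] assms by auto
  then show "\<exists>!m. m \<in> Poly_Mapping.keys f \<and> (\<forall>m'\<in>Poly_Mapping.keys f. le m' m)"
    using antisym by blast
qed

lemma lead_mon_in_keys: "f \<noteq> 0 \<Longrightarrow> lead_mon le f \<in> Poly_Mapping.keys f"
  using lead_mon_greatest by blast

lemma le_lead_mon: "m \<in> Poly_Mapping.keys f \<Longrightarrow> le m (lead_mon le f)"
  using lead_mon_greatest[of f] by fastforce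

lemma lookup_lead_mon_nonzero: "f \<noteq> 0 \<Longrightarrow> Poly_Mapping.lookup f (lead_mon le f) \<noteq> 0"
  using lead_mon_in_keys by (simp add: in_keys_iff)

lemma lead_mon_eqI:
  assumes "m \<in> Poly_Mapping.keys f" "\<And>m'. m' \<in> Poly_Mapping.keys f \<Longrightarrow> le m' m"
  shows "lead_mon le f = m"
proof -
  have "f \<noteq> 0"
    using assms(1) by auto
  then show ?thesis
    using antisym[OF le_lead_mon[OF assms(1)] assms(2)[OF lead_mon_in_keys]] by simp
qed

lemma keys_mult_le_lead_mon:
  assumes "m \<in> Poly_Mapping.keys (f * g)"
  shows "le m (lead_mon le f + lead_mon le g)"
proof -
  obtain x y where "x \<in> Poly_Mapping.keys f" "y \<in> Poly_Mapping.keys g" "m = x + y"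
    using assms keys_mult[of f g] by blast
  then show ?thesis
    using add_mono[OF le_lead_mon le_lead_mon] by simp
qed

lemma lookup_mult_lead_mon:
  fixes f g :: "('v, 'a::comm_ring_1) mpoly"
  assumes "f \<noteq> 0" "g \<noteq> 0"
  defines "a \<equiv> lead_mon le f" and "b \<equiv> lead_mon le g"
  shows "Poly_Mapping.lookup (f * g) (a + b) = Poly_Mapping.lookup f a * Poly_Mapping.lookup g b"
proof -
  define ca cb where "ca = Poly_Mapping.lookup f a" and "cb = Poly_Mapping.lookup g b"
  define f1 g1 where "f1 = f - Poly_Mapping.single a ca" and "g1 = g - Poly_Mapping.single b cb"
  have keys_f1: "Poly_Mapping.keys f1 = Poly_Mapping.keys f - {a}"
    and keys_g1: "Poly_Mapping.keys g1 = Poly_Mapping.keys g - {b}"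
    unfolding f1_def g1_def ca_def cb_def by (simp_all add: keys_minus_single_lookup)
  have "f * g = Poly_Mapping.single a ca * Poly_Mapping.single b cb
      + (Poly_Mapping.single a ca * g1 + f1 * (Poly_Mapping.single b cb + g1))"
    unfolding f1_def g1_def by (simp add: algebra_simps)
  then have decomp: "f * g = Poly_Mapping.single (a + b) (ca * cb)
      + (Poly_Mapping.single a ca * g1 + f1 * g)"
    unfolding g1_def by (simp add: mult_single)
  have "a + b \<notin> Poly_Mapping.keys (Poly_Mapping.single a ca * g1)"
    using keys_mult[of "Poly_Mapping.single a ca" g1] keys_g1 by (auto split: if_splits)
  moreover have "a + b \<notin> Poly_Mapping.keys (f1 * g)"
  proof
    assume "a + b \<in> Poly_Mapping.keys (f1 * g)"
    then obtain x y where xy: "x \<in> Poly_Mapping.keys f" "x \<noteq> a" "y \<in> Poly_Mapping.keys g" "a + b = x + y"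
      using keys_mult[of f1 g] keys_f1 by blast
    then have "le x a" "le y b"
      unfolding a_def b_def by (simp_all add: le_lead_mon)
    have "le (a + b) (a + y)"
      using \<open>le x a\<close> xy(4) add_right_mono[of x a y] by simp
    moreover have "le (a + y) (a + b)"
      using add_mono[OF refl \<open>le y b\<close>] .
    ultimately have "y = b"
      using antisym by fastforce
    then show False
      using xy(2,4) by simp
  qed
  ultimately show ?thesis
    unfolding decomp ca_def cb_def by (simp add: lookup_add in_keys_iff)
qed

lemma lead_mon_mult:
  fixes f g :: "('v, 'a::idom) mpoly"
  assumes "f \<noteq> 0" "g \<noteq> 0"
  shows mult_neq_zero: "f * g \<noteq> 0"
    and "lead_mon le (f * g) = lead_mon le f + lead_mon le g"
proof -
  have "lead_mon le f + lead_mon le g \<in> Poly_Mapping.keys (f * g)"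
    using lookup_mult_lead_mon[OF assms] lookup_lead_mon_nonzero[OF assms(1)]
      lookup_lead_mon_nonzero[OF assms(2)] by (simp add: in_keys_iff)
  then show "f * g \<noteq> 0" "lead_mon le (f * g) = lead_mon le f + lead_mon le g"
    by (auto intro: lead_mon_eqI keys_mult_le_lead_mon)
qed

end

lemma mon_mult: "(mon a :: ('v, 'a::comm_ring_1) mpoly) * mon b = mon (a + b)"
  unfolding mon_def by (simp add: mult_single)

lemma keys_mon: "Poly_Mapping.keys (mon m :: ('v, 'a::comm_ring_1) mpoly) = {m}"
  unfolding mon_def by simp

lemma monomial_ideal_keys_dvd:
  fixes p :: "('v, 'a::comm_ring_1) mpoly"
  assumes "p \<in> ideal_gen (mon ` G)" "m \<in> Poly_Mapping.keys p"
  shows "\<exists>g\<in>G. mon_dvd g m"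
proof -
  define K :: "('v, 'a) mpoly set" where
    "K = {p. \<forall>m\<in>Poly_Mapping.keys p. \<exists>g\<in>G. mon_dvd g m}"
  have "is_ideal K"
    unfolding is_ideal_def
  proof (intro conjI ballI allI)
    show "0 \<in> K"
      by (simp add: K_def)
  next
    fix a b assume "a \<in> K" "b \<in> K"
    then show "a + b \<in> K"
      using keys_add[of a b] by (auto simp: K_def)
  next
    fix r a assume "a \<in> K"
    then show "r * a \<in> K"
      using keys_mult[of r a] mon_dvd_add_left by (fastforce simp: K_def)
  qed
  moreover have "mon ` G \<subseteq> K"
    by (auto simp: K_def keys_mon mon_dvd_def)
  ultimately have "p \<in> K"
    using ideal_gen_least assms(1) by blast
  then show ?thesis
    using assms(2) by (simp add: K_def)
qed

lemma single_mem_monomial_ideal: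
  fixes c :: "'a::comm_ring_1"
  assumes "g \<in> G" "mon_dvd g m"
  shows "Poly_Mapping.single m c \<in> ideal_gen (mon ` G)"
proof -
  have "Poly_Mapping.single m c = Poly_Mapping.single (m - g) c * mon g"
    using mon_dvd_add_diff[OF assms(2)] unfolding mon_def by (simp add: mult_single add.commute)
  moreover have "mon g \<in> ideal_gen (mon ` G)"
    using assms(1) ideal_gen_subset by blast
  ultimately show ?thesis
    using ideal_mult_left[OF is_ideal_ideal_gen] by metis
qed

context term_ord
begin

lemma squarefree_monomial_ideal_radical:
  fixes J :: "('v, 'a::field) mpoly set"
  assumes "squarefree_monomial_ideal J"
  shows "h * h \<in> J \<Longrightarrow> h \<in> J"
proof (induction "card (Poly_Mapping.keys h)" arbitrary: h rule: less_induct)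
  case less
  obtain G where G: "\<forall>g\<in>G. \<forall>v. Poly_Mapping.lookup g v \<le> 1" "J = ideal_gen (mon ` G)"
    using assms unfolding squarefree_monomial_ideal_def by blast
  have J: "is_ideal J"
    using G(2) is_ideal_ideal_gen by simp
  show ?case
  proof (cases "h = 0")
    case True
    then show ?thesis
      using ideal_zero[OF J] by simp
  next
    case False
    \<comment> \<open>The leading term of \<open>h\<close> lies in \<open>J\<close>: twice its exponent is a monomial of \<open>h * h\<close>.\<close>
    define a where "a = lead_mon le h"
    define l where "l = Poly_Mapping.single a (Poly_Mapping.lookup h a)"
    have "a + a \<in> Poly_Mapping.keys (h * h)"
      using lead_mon_in_keys[OF mult_neq_zero[OF False False]] lead_mon_mult[OF False False]
      by (simp add: a_def)
    then obtain g where "g \<in> G" "mon_dvd g (a + a)"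
      using monomial_ideal_keys_dvd less.prems G(2) by blast
    have "mon_dvd g a"
      using squarefree_mon_dvd_double[OF bspec[OF G(1) \<open>g \<in> G\<close>] \<open>mon_dvd g (a + a)\<close>] .
    then have "l \<in> J"
      unfolding l_def G(2) by (rule single_mem_monomial_ideal[OF \<open>g \<in> G\<close>])
    define h1 where "h1 = h - l"
    have "card (Poly_Mapping.keys h1) < card (Poly_Mapping.keys h)"
      using card_Diff1_less[OF finite_keys lead_mon_in_keys[OF False]]
      by (simp add: h1_def l_def a_def keys_minus_single_lookup)
    moreover have "h1 * h1 \<in> J"
    proof -
      have "h1 * h1 = h * h - l * (h + h1)"
        unfolding h1_def by (simp add: algebra_simps)
      then show ?thesis
        using ideal_diff[OF J less.prems ideal_mult_right[OF J \<open>l \<in> J\<close>]] by simp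
    qed
    ultimately have "h1 \<in> J"
      by (rule less.hyps)
    then show ?thesis
      using ideal_add[OF J \<open>h1 \<in> J\<close> \<open>l \<in> J\<close>] by (simp add: h1_def)
  qed
qed

lemma init_ideal_eq: "init_ideal le J = ideal_gen (mon ` {lead_mon le f | f. f \<in> J \<and> f \<noteq> 0})"
  unfolding init_ideal_def by (rule arg_cong[where f = ideal_gen]) blast

lemma mon_lead_mon_mem_init_ideal: "f \<in> J \<Longrightarrow> f \<noteq> 0 \<Longrightarrow> mon (lead_mon le f) \<in> init_ideal le J"
  unfolding init_ideal_def by (rule ideal_gen_subset[THEN subsetD]) blast

lemma is_ideal_init_ideal: "is_ideal (init_ideal le J)"
  unfolding init_ideal_def by (rule is_ideal_ideal_gen)

lemma init_ideal_mono: "J \<subseteq> K \<Longrightarrow> init_ideal le J \<subseteq> init_ideal le K"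
  unfolding init_ideal_def by (rule ideal_gen_mono) blast

lemma init_ideal_least:
  "is_ideal X \<Longrightarrow> (\<And>f. f \<in> K \<Longrightarrow> f \<noteq> 0 \<Longrightarrow> mon (lead_mon le f) \<in> X) \<Longrightarrow> init_ideal le K \<subseteq> X"
  unfolding init_ideal_def by (rule ideal_gen_least) auto

lemma mon_mem_init_idealE:
  fixes J :: "('v, 'a::field) mpoly set"
  assumes "mon m \<in> init_ideal le J"
  obtains g where "g \<in> J" "g \<noteq> 0" "mon_dvd (lead_mon le g) m"
  using monomial_ideal_keys_dvd[of "mon m" "{lead_mon le f | f. f \<in> J \<and> f \<noteq> 0}" m] assms
  unfolding init_ideal_eq by (auto simp: keys_mon)

lemma ideal_mult_init_ideal_subset:
  fixes J K :: "('v, 'a::field) mpoly set"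
  shows "ideal_mult (init_ideal le J) (init_ideal le K) \<subseteq> init_ideal le (ideal_mult J K)"
proof -
  have "ideal_mult (init_ideal le J) (init_ideal le K) \<subseteq> ideal_gen {a * b | a b.
      a \<in> mon ` {lead_mon le f | f. f \<in> J \<and> f \<noteq> 0} \<and> b \<in> mon ` {lead_mon le f | f. f \<in> K \<and> f \<noteq> 0}}"
    unfolding init_ideal_eq by (rule ideal_mult_ideal_gen)
  also have "\<dots> \<subseteq> init_ideal le (ideal_mult J K)"
  proof (rule ideal_gen_least[OF is_ideal_init_ideal], safe)
    fix f g assume "f \<in> J" "f \<noteq> 0" "g \<in> K" "g \<noteq> 0"
    then have "mon (lead_mon le (f * g)) \<in> init_ideal le (ideal_mult J K)"
      by (intro mon_lead_mon_mem_init_ideal mult_mem_ideal_mult mult_neq_zero)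
    then show "mon (lead_mon le f) * mon (lead_mon le g) \<in> init_ideal le (ideal_mult J K)"
      by (simp add: mon_mult lead_mon_mult \<open>f \<noteq> 0\<close> \<open>g \<noteq> 0\<close>)
  qed
  finally show ?thesis .
qed

lemma init_ideal_UNIV: "init_ideal le (UNIV :: ('v, 'a::field) mpoly set) = UNIV"
proof -
  have "lead_mon le (1 :: ('v, 'a) mpoly) = 0"
    by (rule lead_mon_eqI) (simp_all add: refl)
  moreover have "mon (lead_mon le (1 :: ('v, 'a) mpoly)) \<in> init_ideal le (UNIV :: ('v, 'a) mpoly set)"
    by (rule mon_lead_mon_mem_init_ideal) simp_all
  ultimately have "1 \<in> init_ideal le (UNIV :: ('v, 'a) mpoly set)"
    by (simp add: mon_def)
  then show ?thesis
    using ideal_mult_left[OF is_ideal_init_ideal] by (metis UNIV_eq_I mult.right_neutral)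
qed

lemma ideal_pow_init_ideal_subset:
  fixes I :: "('v, 'a::field) mpoly set"
  shows "ideal_pow (init_ideal le I) n \<subseteq> init_ideal le (ideal_pow I n)"
proof (induction n)
  case (Suc n)
  have "ideal_pow (init_ideal le I) (Suc n) \<subseteq> ideal_mult (init_ideal le I) (init_ideal le (ideal_pow I n))"
    using ideal_mult_mono[OF order_refl Suc] by simp
  also have "\<dots> \<subseteq> init_ideal le (ideal_pow I (Suc n))"
    using ideal_mult_init_ideal_subset by simp
  finally show ?case .
qed (simp add: init_ideal_UNIV)

lemma lead_mon_diff_less:
  assumes "f \<noteq> 0" "f - h \<noteq> 0" "lead_mon le h = lead_mon le f"
    and "Poly_Mapping.lookup h (lead_mon le f) = Poly_Mapping.lookup f (lead_mon le f)"
  shows "lt (lead_mon le (f - h)) (lead_mon le f)"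
proof -
  have "h \<noteq> 0"
    using assms(4) lookup_lead_mon_nonzero[OF assms(1)] by auto
  have "le k (lead_mon le f)" if "k \<in> Poly_Mapping.keys (f - h)" for k
  proof -
    have "k \<in> Poly_Mapping.keys f \<or> k \<in> Poly_Mapping.keys h"
      using that keys_diff[of f h] by blast
    then show ?thesis
      using le_lead_mon[of k f] le_lead_mon[of k h] assms(3) by auto
  qed
  moreover have "lead_mon le f \<notin> Poly_Mapping.keys (f - h)"
    using assms(4) by (simp add: in_keys_iff lookup_minus)
  ultimately show ?thesis
    using lead_mon_in_keys[OF assms(2)] by (auto simp: lt_def)
qed

lemma ex_multiple_with_lead_term:
  fixes g :: "('v, 'a::field) mpoly"
  assumes "g \<noteq> 0" "mon_dvd (lead_mon le g) m" "c \<noteq> 0"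
  shows "\<exists>q. lead_mon le (q * g) = m \<and> Poly_Mapping.lookup (q * g) m = c"
proof -
  define d where "d = m - lead_mon le g"
  define q where "q = Poly_Mapping.single d (c / Poly_Mapping.lookup g (lead_mon le g))"
  have m: "m = d + lead_mon le g"
    using mon_dvd_add_diff[OF assms(2)] by (simp add: d_def add.commute)
  have "Poly_Mapping.keys q = {d}"
    using assms(3) lookup_lead_mon_nonzero[OF assms(1)] by (simp add: q_def)
  then have "q \<noteq> 0" "lead_mon le q = d"
    using lead_mon_eqI[of d q] refl by auto
  have "lead_mon le (q * g) = m"
    using lead_mon_mult(2)[OF \<open>q \<noteq> 0\<close> assms(1)] \<open>lead_mon le q = d\<close> m by simp
  moreover have "Poly_Mapping.lookup (q * g) m = Poly_Mapping.lookup q d * Poly_Mapping.lookup g (lead_mon le g)"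
    using lookup_mult_lead_mon[OF \<open>q \<noteq> 0\<close> assms(1)] \<open>lead_mon le q = d\<close> m by simp
  moreover have "\<dots> = c"
    using lookup_lead_mon_nonzero[OF assms(1)] by (simp add: q_def)
  ultimately show ?thesis
    by auto
qed

end

section \<open>The comparison principle and Noetherianity\<close>

locale finite_term_ord = term_ord le
  for le :: "('v::finite \<Rightarrow>\<^sub>0 nat) \<Rightarrow> ('v \<Rightarrow>\<^sub>0 nat) \<Rightarrow> bool"
begin

lemma wf_lt: "wf {(a, b). lt a b}"
proof (rule ccontr)
  assume "\<not> wf {(a, b). lt a b}"
  then obtain f where f: "\<And>i. lt (f (Suc i)) (f i)"
    unfolding wf_iff_no_infinite_down_chain by auto
  have "lt (f j) (f i)" if "i < j" for i j
    using that
  proof (induction j)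
    case (Suc j)
    then show ?case
      using f[of j] trans antisym unfolding lt_def by (metis less_Suc_eq)
  qed simp
  moreover obtain i j where "i < j" "mon_dvd (f i) (f j)"
    using dickson[of f] by blast
  ultimately show False
    using mon_dvd_imp_le antisym unfolding lt_def by blast
qed

lemma subset_if_init_ideal_subset:
  fixes J K :: "('v, 'a::field) mpoly set"
  assumes J: "is_ideal J" and K: "is_ideal K" and "J \<subseteq> K"
    and init: "init_ideal le K \<subseteq> init_ideal le J"
  shows "K \<subseteq> J"
proof -
  have "f \<in> J" if "f \<in> K" "f \<noteq> 0" "lead_mon le f = m" for f m
    using wf_lt that
  proof (induction m arbitrary: f rule: wf_induct_rule)
    case (less m)
    obtain g where g: "g \<in> J" "g \<noteq> 0" "mon_dvd (lead_mon le g) m"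
      using init mon_lead_mon_mem_init_ideal[OF less.prems(1,2)] less.prems(3)
      by (auto elim: mon_mem_init_idealE)
    have "Poly_Mapping.lookup f m \<noteq> 0"
      using lookup_lead_mon_nonzero[OF less.prems(2)] less.prems(3) by simp
    then obtain q where q: "lead_mon le (q * g) = m" "Poly_Mapping.lookup (q * g) m = Poly_Mapping.lookup f m"
      using ex_multiple_with_lead_term[OF g(2,3)] by blast
    have "q * g \<in> J"
      using ideal_mult_left[OF J g(1)] .
    have "f - q * g \<in> J"
    proof (cases "f - q * g = 0")
      case False
      have "lt (lead_mon le (f - q * g)) m"
        using lead_mon_diff_less[OF less.prems(2) False] q less.prems(3) by simp
      moreover have "f - q * g \<in> K"
        using ideal_diff[OF K less.prems(1)] \<open>q * g \<in> J\<close> \<open>J \<subseteq> K\<close> by blast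
      ultimately show ?thesis
        using less.IH False by blast
    qed (simp add: ideal_zero[OF J])
    then show "f \<in> J"
      using ideal_add[OF J \<open>f - q * g \<in> J\<close> \<open>q * g \<in> J\<close>] by simp
  qed
  then show ?thesis
    using ideal_zero[OF J] by blast
qed

lemma wf_ideal_psupset: "wf {(K, J :: ('v, 'a::field) mpoly set). is_ideal J \<and> is_ideal K \<and> J \<subset> K}"
proof (rule ccontr)
  assume "\<not> ?thesis"
  then obtain J :: "nat \<Rightarrow> ('v, 'a) mpoly set"
    where "\<forall>i. (J (Suc i), J i) \<in> {(K, J). is_ideal J \<and> is_ideal K \<and> J \<subset> K}"
    unfolding wf_iff_no_infinite_down_chain by blast
  then have J: "\<And>i. is_ideal (J i)" and chain: "\<And>i. J i \<subset> J (Suc i)"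
    by auto
  have "\<exists>f. f \<in> J (Suc i) \<and> f \<noteq> 0 \<and> mon (lead_mon le f) \<notin> init_ideal le (J i)" for i
  proof (rule ccontr)
    assume "\<not> ?thesis"
    then have "init_ideal le (J (Suc i)) \<subseteq> init_ideal le (J i)"
      by (intro init_ideal_least is_ideal_init_ideal) blast
    then show False
      using subset_if_init_ideal_subset[OF J J] chain[of i] by blast
  qed
  then obtain f where f: "\<And>i. f i \<in> J (Suc i)" "\<And>i. f i \<noteq> 0"
    and new: "\<And>i. mon (lead_mon le (f i)) \<notin> init_ideal le (J i)"
    by metis
  obtain i j where ij: "i < j" "mon_dvd (lead_mon le (f i)) (lead_mon le (f j))"
    using dickson[of "\<lambda>i. lead_mon le (f i)"] by blast
  have "J (Suc i) \<subseteq> J j"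
    using \<open>i < j\<close> chain lift_Suc_mono_le[of J "Suc i" j] by fastforce
  then have "mon (lead_mon le (f i)) \<in> init_ideal le (J j)"
    using mon_lead_mon_mem_init_ideal[OF f(1,2)] init_ideal_mono by blast
  then have "mon (lead_mon le (f i)) * mon (lead_mon le (f j) - lead_mon le (f i)) \<in> init_ideal le (J j)"
    using ideal_mult_right[OF is_ideal_init_ideal] by blast
  then show False
    using new[of j] mon_dvd_add_diff[OF ij(2)] by (simp add: mon_mult)
qed

section \<open>Initial ideals of symbolic powers\<close>

lemma Inter_Min_primes_eq:
  fixes I :: "('v, 'a::field) mpoly set"
  assumes I: "is_ideal I" and init: "init_ideal le I = (\<Inter>P\<in>Min_primes I. init_ideal le P)"
  shows "\<Inter>(Min_primes I) = I"
proof
  have "init_ideal le (\<Inter>(Min_primes I)) \<subseteq> init_ideal le I"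
    unfolding init using init_ideal_mono by blast
  moreover have "is_ideal (\<Inter>(Min_primes I))"
    using Min_primesD(1) prime_ideal_is_ideal by (blast intro: is_ideal_Inter)
  moreover have "I \<subseteq> \<Inter>(Min_primes I)"
    using Min_primesD(2) by blast
  ultimately show "\<Inter>(Min_primes I) \<subseteq> I"
    using subset_if_init_ideal_subset[OF I] by blast
qed (use Min_primesD(2) in blast)

lemma init_ideal_symb_pow_subset:
  fixes I :: "('v, 'a::field) mpoly set"
  assumes I: "is_ideal I" and sq: "squarefree_monomial_ideal (init_ideal le I)"
    and c: "\<forall>P\<in>Min_primes I. init_ideal le (symb_pow P t) = symb_pow (init_ideal le P) t"
    and d: "init_ideal le I = (\<Inter>P\<in>Min_primes I. init_ideal le P)"
  shows "init_ideal le (symb_pow I t) \<subseteq> symb_pow (init_ideal le I) t"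
proof (rule init_ideal_least[OF is_ideal_symb_pow])
  have fin: "finite (Min_primes I)"
    by (rule finite_Min_primes[OF wf_ideal_psupset I])
  have Ass: "Min_primes I \<subseteq> Ass I"
    using Min_primes_subset_Ass[OF fin] Inter_Min_primes_eq[OF I d] by simp
  fix g assume g: "g \<in> symb_pow I t" "g \<noteq> 0"
  have "mon (lead_mon le g) \<in> symb_pow (init_ideal le P) t" if "P \<in> Min_primes I" for P
  proof -
    have "g \<in> symb_pow P t"
      using symb_pow_subset_symb_pow_Ass[OF I] Ass that g(1) by blast
    then show ?thesis
      using mon_lead_mon_mem_init_ideal[OF _ g(2)] c that by blast
  qed
  then have "mon (lead_mon le g) \<in> (\<Inter>N\<in>init_ideal le ` Min_primes I. symb_pow N t)"
    by blast
  also have "\<dots> \<subseteq> symb_pow (\<Inter>(init_ideal le ` Min_primes I)) t"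
    using squarefree_monomial_ideal_radical[OF sq] d
    by (intro symb_pow_Inter_subset) (auto simp: fin is_ideal_init_ideal)
  finally show "mon (lead_mon le g) \<in> symb_pow (init_ideal le I) t"
    by (simp only: d)
qed

end

theorem lemma3p17:
  fixes I :: "('v::finite, 'a::field) mpoly set"
    and le :: "('v \<Rightarrow>\<^sub>0 nat) \<Rightarrow> ('v \<Rightarrow>\<^sub>0 nat) \<Rightarrow> bool"
    and t :: nat
  assumes "t > 0"
    and "is_ideal I"
    and "term_order le"
    and "squarefree_monomial_ideal (init_ideal le I)"
    and a: "\<forall>P\<in>Min_primes I. squarefree_monomial_ideal (init_ideal le P)"
    and b: "symb_pow (init_ideal le I) t = ideal_pow (init_ideal le I) t"
    and c: "\<forall>P\<in>Min_primes I. init_ideal le (symb_pow P t) = symb_pow (init_ideal le P) t"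
    and d: "init_ideal le I = (\<Inter>P\<in>Min_primes I. init_ideal le P)"
  shows "symb_pow I t = ideal_pow I t"
proof -
  interpret finite_term_ord le
    by unfold_locales (rule assms(3))
  have "init_ideal le (symb_pow I t) \<subseteq> symb_pow (init_ideal le I) t"
    by (rule init_ideal_symb_pow_subset[OF assms(2,4) c d])
  also have "\<dots> = ideal_pow (init_ideal le I) t"
    by (rule b)
  also have "\<dots> \<subseteq> init_ideal le (ideal_pow I t)"
    by (rule ideal_pow_init_ideal_subset)
  finally have "symb_pow I t \<subseteq> ideal_pow I t"
    by (rule subset_if_init_ideal_subset[OF is_ideal_ideal_pow is_ideal_symb_pow ideal_pow_subset_symb_pow])
  then show ?thesis
    using ideal_pow_subset_symb_pow by blast
qed

end
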